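(* Let $m,\ell\geq 2$ and let $n\ge 1$ be divisible by $\ell$. Then \[a_{2(\ell)}(n)=b_\ell(2n,n),\] and more generally \[a_{m(\ell)}(n)=a_{(m-1)(\ell)}(2n,n).\]
   Context: An $\ell$-regular partition is a partition with no part divisible by $\ell$. $a_{m(\ell)}(n)$ is the number of $\ell$-regular partitions of $n$ in which the smallest part occurs at least $m$ times. $a_{m(\ell)}(N,k)$ is the number of $\ell$-regular partitions of $N$ in which the smallest part occurs at least $m$ times and the largest part minus the smallest part equals $k$. $b_\ell(N,k)$ is the number of $\ell$-regular partitions of $N$ in which the largest part minus the smallest part equals $k$. *)

theory Defs
  imports Main "HOL-Library.Multiset"
begin

definition is_partition :: "nat multiset \<Rightarrow> nat \<Rightarrow> bool" where
  "is_partition P N \<longleftrightarrow> (\<forall>x\<in>#P. 0 < x) \<and> sum_mset P = N"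

definition regular :: "nat \<Rightarrow> nat multiset \<Rightarrow> bool" where
  "regular l P \<longleftrightarrow> (\<forall>x\<in>#P. \<not> l dvd x)"

definition smallest_part :: "nat multiset \<Rightarrow> nat" where
  "smallest_part P = Min (set_mset P)"

definition largest_part :: "nat multiset \<Rightarrow> nat" where
  "largest_part P = Max (set_mset P)"

definition smallest_mult_ge :: "nat \<Rightarrow> nat multiset \<Rightarrow> bool" where
  "smallest_mult_ge m P \<longleftrightarrow> P \<noteq> {#} \<and> m \<le> count P (smallest_part P)"

definition a_reg :: "nat \<Rightarrow> nat \<Rightarrow> nat \<Rightarrow> nat" where
  "a_reg m l n = card {P. is_partition P n \<and> regular l P \<and> smallest_mult_ge m P}"

definition a_reg2 :: "nat \<Rightarrow> nat \<Rightarrow> nat \<Rightarrow> nat \<Rightarrow> nat" where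
  "a_reg2 m l N k = card {P. is_partition P N \<and> regular l P \<and> smallest_mult_ge m P
      \<and> P \<noteq> {#} \<and> largest_part P - smallest_part P = k}"

definition b_reg :: "nat \<Rightarrow> nat \<Rightarrow> nat \<Rightarrow> nat" where
  "b_reg l N k = card {P. is_partition P N \<and> regular l P
      \<and> P \<noteq> {#} \<and> largest_part P - smallest_part P = k}"

end

theory Submission
  imports Defs
begin

text \<open>Take one copy of the smallest part s of a partition of n counted by a_{m(l)}(n) and
  enlarge it to s + n. Since every part is at most n, the new part is the unique largest one,
  the smallest part s survives with one copy fewer (here m \<ge> 2 is needed), the sum becomes 2n
  and the difference of extreme parts is n; as l divides n, no new part is divisible by l.
  Conversely, lowering the largest part s + n of a partition counted by a_{(m-1)(l)}(2n, n)
  back to s undoes this, so the two sets are in bijection.\<close>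

lemma member_le_sum_mset: "x \<in># (P :: nat multiset) \<Longrightarrow> x \<le> sum_mset P"
  by (metis le_add1 multi_member_split sum_mset.add_mset)

lemma smallest_part_in: "P \<noteq> {#} \<Longrightarrow> smallest_part P \<in># P"
  by (simp add: smallest_part_def)

lemma smallest_part_le: "x \<in># P \<Longrightarrow> smallest_part P \<le> x"
  by (simp add: smallest_part_def)

lemma largest_part_in: "P \<noteq> {#} \<Longrightarrow> largest_part P \<in># P"
  by (simp add: largest_part_def)

lemma smallest_part_eqI: "s \<in># P \<Longrightarrow> (\<And>x. x \<in># P \<Longrightarrow> s \<le> x) \<Longrightarrow> smallest_part P = s"
  unfolding smallest_part_def by (metis Min_eqI finite_set_mset)

lemma largest_part_eqI: "t \<in># P \<Longrightarrow> (\<And>x. x \<in># P \<Longrightarrow> x \<le> t) \<Longrightarrow> largest_part P = t"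
  unfolding largest_part_def by (metis Max_eqI finite_set_mset)

lemma smallest_mult_ge_1_iff: "smallest_mult_ge 1 P \<longleftrightarrow> P \<noteq> {#}"
  by (auto simp: smallest_mult_ge_def Suc_le_eq dest: smallest_part_in)

definition shift_smallest :: "nat \<Rightarrow> nat multiset \<Rightarrow> nat multiset" where
  "shift_smallest n P = add_mset (smallest_part P + n) (P - {#smallest_part P#})"

definition unshift_largest :: "nat multiset \<Rightarrow> nat multiset" where
  "unshift_largest Q = add_mset (smallest_part Q) (Q - {#largest_part Q#})"

lemma smallest_part_shift_smallest:
  assumes "2 \<le> count P (smallest_part P)"
  shows "smallest_part (shift_smallest n P) = smallest_part P"
proof (rule smallest_part_eqI)
  show "smallest_part P \<in># shift_smallest n P"
    using assms by (simp add: shift_smallest_def in_diff_count)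
qed (auto simp: shift_smallest_def smallest_part_le dest: in_diffD)

lemma largest_part_shift_smallest:
  assumes "\<And>x. x \<in># P \<Longrightarrow> x \<le> smallest_part P + n"
  shows "largest_part (shift_smallest n P) = smallest_part P + n"
  by (rule largest_part_eqI) (auto simp: shift_smallest_def assms dest: in_diffD)

lemma count_shift_smallest:
  assumes "0 < n"
  shows "count (shift_smallest n P) (smallest_part P) = count P (smallest_part P) - 1"
  using assms by (simp add: shift_smallest_def)

lemma sum_mset_shift_smallest:
  "P \<noteq> {#} \<Longrightarrow> sum_mset (shift_smallest n P) = sum_mset P + n"
  by (auto simp: shift_smallest_def sum_mset_diff smallest_part_in member_le_sum_mset)

lemma regular_shift_smallest:
  "regular l P \<Longrightarrow> P \<noteq> {#} \<Longrightarrow> l dvd n \<Longrightarrow> regular l (shift_smallest n P)"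
  by (auto simp: regular_def shift_smallest_def smallest_part_in dvd_add_left_iff dest: in_diffD)

lemma smallest_part_unshift_largest:
  "Q \<noteq> {#} \<Longrightarrow> smallest_part (unshift_largest Q) = smallest_part Q"
  by (rule smallest_part_eqI) (auto simp: unshift_largest_def smallest_part_le dest: in_diffD)

lemma count_unshift_largest:
  assumes "largest_part Q \<noteq> smallest_part Q"
  shows "count (unshift_largest Q) (smallest_part Q) = Suc (count Q (smallest_part Q))"
  using assms by (simp add: unshift_largest_def)

lemma sum_mset_unshift_largest:
  assumes "Q \<noteq> {#}"
  shows "sum_mset (unshift_largest Q) = sum_mset Q - largest_part Q + smallest_part Q"
proof -
  have "largest_part Q \<in># Q"
    using assms by (rule largest_part_in)
  then show ?thesis
    by (simp add: unshift_largest_def sum_mset_diff member_le_sum_mset)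
qed

lemma regular_unshift_largest:
  "regular l Q \<Longrightarrow> Q \<noteq> {#} \<Longrightarrow> regular l (unshift_largest Q)"
  by (auto simp: regular_def unshift_largest_def smallest_part_in dest: in_diffD)

lemma unshift_shift_smallest:
  assumes "2 \<le> count P (smallest_part P)" and "\<And>x. x \<in># P \<Longrightarrow> x \<le> smallest_part P + n"
  shows "unshift_largest (shift_smallest n P) = P"
proof -
  have "smallest_part P \<in># P"
    using assms(1) by (auto intro: count_inI)
  moreover have "largest_part (shift_smallest n P) = smallest_part P + n"
    using assms(2) by (rule largest_part_shift_smallest)
  ultimately show ?thesis
    by (simp add: unshift_largest_def smallest_part_shift_smallest[OF assms(1)])
      (simp add: shift_smallest_def)
qed

lemma shift_unshift_largest:
  assumes "Q \<noteq> {#}" and "largest_part Q = smallest_part Q + n"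
  shows "shift_smallest n (unshift_largest Q) = Q"
proof -
  have "largest_part Q \<in># Q"
    using assms(1) by (rule largest_part_in)
  then show ?thesis
    unfolding shift_smallest_def smallest_part_unshift_largest[OF assms(1)]
    by (simp add: unshift_largest_def flip: assms(2))
qed

lemma shift_smallest_counted:
  fixes m l n :: nat
  assumes "is_partition P n" "regular l P" "smallest_mult_ge m P"
    and m: "2 \<le> m" and n: "1 \<le> n" and "l dvd n"
  shows "is_partition (shift_smallest n P) (2*n)" "regular l (shift_smallest n P)"
    "smallest_mult_ge (m - 1) (shift_smallest n P)"
    "largest_part (shift_smallest n P) - smallest_part (shift_smallest n P) = n"
    "unshift_largest (shift_smallest n P) = P"
proof -
  define s where "s = smallest_part P"
  define S where "S = shift_smallest n P"
  from assms(1-3) have P: "P \<noteq> {#}" "m \<le> count P s" "\<forall>x\<in>#P. 0 < x" "sum_mset P = n"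
    by (auto simp: smallest_mult_ge_def is_partition_def s_def)
  have two: "2 \<le> count P (smallest_part P)"
    using P(2) m by (simp add: s_def)
  have bounded: "x \<le> smallest_part P + n" if "x \<in># P" for x
    using member_le_sum_mset[OF that] P(4) by linarith
  have "smallest_part S = s" "largest_part S = s + n" "count S s = count P s - 1"
    "sum_mset S = 2*n" "S \<noteq> {#}"
    using P n two bounded
    by (simp_all add: S_def s_def smallest_part_shift_smallest largest_part_shift_smallest
        count_shift_smallest sum_mset_shift_smallest)
      (simp add: shift_smallest_def)
  moreover have "\<forall>x\<in>#S. 0 < x"
    using P(3) n by (auto simp: S_def shift_smallest_def dest: in_diffD)
  ultimately show "is_partition (shift_smallest n P) (2*n)"
    "smallest_mult_ge (m - 1) (shift_smallest n P)"
    "largest_part (shift_smallest n P) - smallest_part (shift_smallest n P) = n"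
    using P(2) by (simp_all add: is_partition_def smallest_mult_ge_def flip: S_def)
  show "regular l (shift_smallest n P)"
    using assms(2) P(1) \<open>l dvd n\<close> by (rule regular_shift_smallest)
  show "unshift_largest (shift_smallest n P) = P"
    using two bounded by (rule unshift_shift_smallest)
qed

lemma unshift_largest_counted:
  fixes m l n :: nat
  assumes "is_partition Q (2*n)" "regular l Q" "smallest_mult_ge (m - 1) Q"
    "largest_part Q - smallest_part Q = n" and m: "2 \<le> m" and n: "1 \<le> n"
  shows "is_partition (unshift_largest Q) n" "regular l (unshift_largest Q)"
    "smallest_mult_ge m (unshift_largest Q)" "shift_smallest n (unshift_largest Q) = Q"
proof -
  define s where "s = smallest_part Q"
  define U where "U = unshift_largest Q"
  from assms(1,3,4) have Q: "Q \<noteq> {#}" "m - 1 \<le> count Q s" "\<forall>x\<in>#Q. 0 < x"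
    "sum_mset Q = 2*n" "largest_part Q - s = n"
    using m by (auto simp: smallest_mult_ge_def is_partition_def s_def)
  have gap: "largest_part Q = s + n"
    using Q(5) n by linarith
  have "largest_part Q \<le> sum_mset Q"
    using Q(1) by (simp add: largest_part_in member_le_sum_mset)
  then have "sum_mset U = n"
    using Q(1,4) gap by (simp add: U_def s_def sum_mset_unshift_largest)
  moreover have "smallest_part U = s" "count U s = Suc (count Q s)"
    using Q(1) gap n
    by (simp_all add: U_def s_def smallest_part_unshift_largest count_unshift_largest)
  moreover have "U \<noteq> {#}" "\<forall>x\<in>#U. 0 < x"
    using Q(1,3) by (auto simp: U_def unshift_largest_def smallest_part_in s_def dest: in_diffD)
  ultimately show "is_partition (unshift_largest Q) n" "smallest_mult_ge m (unshift_largest Q)"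
    using Q(2) m by (simp_all add: is_partition_def smallest_mult_ge_def flip: U_def)
  show "regular l (unshift_largest Q)"
    using assms(2) Q(1) by (rule regular_unshift_largest)
  show "shift_smallest n (unshift_largest Q) = Q"
    using Q(1) gap unfolding s_def by (rule shift_unshift_largest)
qed

lemma a_reg_eq_a_reg2:
  fixes m l n :: nat
  assumes "2 \<le> m" and "1 \<le> n" and "l dvd n"
  shows "a_reg m l n = a_reg2 (m - 1) l (2*n) n"
proof -
  let ?A = "{P. is_partition P n \<and> regular l P \<and> smallest_mult_ge m P}"
  let ?B = "{Q. is_partition Q (2*n) \<and> regular l Q \<and> smallest_mult_ge (m - 1) Q
      \<and> Q \<noteq> {#} \<and> largest_part Q - smallest_part Q = n}"
  have "unshift_largest (shift_smallest n P) = P" if "P \<in> ?A" for P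
    using that assms shift_smallest_counted by blast
  moreover have "shift_smallest n (unshift_largest Q) = Q" if "Q \<in> ?B" for Q
    using that assms unshift_largest_counted by blast
  moreover have "shift_smallest n ` ?A \<subseteq> ?B"
    using assms shift_smallest_counted by (auto simp: shift_smallest_def)
  moreover have "unshift_largest ` ?B \<subseteq> ?A"
    using assms unshift_largest_counted by blast
  ultimately have "bij_betw (shift_smallest n) ?A ?B"
    by (intro bij_betw_byWitness[where f' = unshift_largest]) auto
  then show ?thesis
    unfolding a_reg_def a_reg2_def by (rule bij_betw_same_card)
qed

theorem theorem5p5:
  fixes m l n :: nat
  assumes "m \<ge> 2" and "l \<ge> 2" and "n \<ge> 1" and "l dvd n"
  shows "a_reg 2 l n = b_reg l (2*n) n \<and> a_reg m l n = a_reg2 (m - 1) l (2*n) n"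
proof
  have "a_reg2 1 l (2*n) n = b_reg l (2*n) n"
    unfolding a_reg2_def b_reg_def smallest_mult_ge_1_iff by simp
  then show "a_reg 2 l n = b_reg l (2*n) n"
    using a_reg_eq_a_reg2[of 2 n l] assms by simp
  show "a_reg m l n = a_reg2 (m - 1) l (2*n) n"
    using a_reg_eq_a_reg2 assms by simp
qed

end
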